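(* In $NOM$, if a sequent $\Gamma\vdash\phi$ is derivable, then for every finite sequence of formulas $\Delta$, the sequent $\Delta,\Gamma\vdash\phi$ is also derivable.
   Context: The propositional deductive system $NOM$: formulas are built from propositional letters using $\wedge$, $\rightarrow$, $\neg$. Sequents are $\phi_1,\ldots,\phi_n\vdash\psi$ ($n\ge0$) with antecedent a finite ordered sequence; commas denote concatenation. With $\Gamma$ a finite possibly empty sequence of formulas and $\phi,\psi,\chi$ formulas, the rules of $NOM$ are: (assumption) $\Gamma,\phi\vdash\phi$; (cut) $\Gamma\vdash\phi$, $\Gamma,\phi\vdash\psi$ $\Rightarrow$ $\Gamma\vdash\psi$; (paste) $\Gamma\vdash\phi$, $\Gamma\vdash\psi$ $\Rightarrow$ $\Gamma,\phi\vdash\psi$; (compatible exchange) $\Gamma,\phi,\psi\vdash\phi$, $\Gamma,\phi,\psi\vdash\chi$, $\Gamma,\psi,\phi\vdash\psi$ $\Rightarrow$ $\Gamma,\psi,\phi\vdash\chi$; ($\wedge$-intro) $\Gamma\vdash\phi$, $\Gamma\vdash\psi$ $\Rightarrow$ $\Gamma\vdash\phi\wedge\psi$; ($\wedge$-elim) $\Gamma\vdash\phi\wedge\psi$ $\Rightarrow$ $\Gamma\vdash\phi$ and $\Rightarrow$ $\Gamma\vdash\psi$; ($\rightarrow$-intro) $\Gamma,\phi\vdash\psi$ $\Rightarrow$ $\Gamma\vdash\phi\rightarrow\psi$; ($\rightarrow$-elim) $\Gamma\vdash\phi\rightarrow\psi$ $\Rightarrow$ $\Gamma,\phi\vdash\psi$;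 (excluded middle) $\Gamma,\phi\vdash\psi$, $\Gamma,\neg\phi\vdash\psi$ $\Rightarrow$ $\Gamma\vdash\psi$; (explosion) $\Gamma\vdash\neg\phi$ $\Rightarrow$ $\Gamma,\phi\vdash\psi$. *)

theory Defs
  imports Main
begin

datatype form = Letter nat | Conj form form | Imp form form | Neg form

text \<open>Derivable sequents of NOM. A sequent is a pair (antecedent list, succedent);
  the antecedent is an ordered finite sequence, commas are list concatenation.\<close>
inductive derivable :: "form list \<Rightarrow> form \<Rightarrow> bool" where
  assumption: "derivable (\<Gamma> @ [\<phi>]) \<phi>"
| cut: "derivable \<Gamma> \<phi> \<Longrightarrow> derivable (\<Gamma> @ [\<phi>]) \<psi> \<Longrightarrow> derivable \<Gamma> \<psi>"
| paste: "derivable \<Gamma> \<phi> \<Longrightarrow> derivable \<Gamma> \<psi> \<Longrightarrow> derivable (\<Gamma> @ [\<phi>]) \<psi>"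
| compat_exchange: "derivable (\<Gamma> @ [\<phi>, \<psi>]) \<phi> \<Longrightarrow> derivable (\<Gamma> @ [\<phi>, \<psi>]) \<chi>
     \<Longrightarrow> derivable (\<Gamma> @ [\<psi>, \<phi>]) \<psi> \<Longrightarrow> derivable (\<Gamma> @ [\<psi>, \<phi>]) \<chi>"
| conj_intro: "derivable \<Gamma> \<phi> \<Longrightarrow> derivable \<Gamma> \<psi> \<Longrightarrow> derivable \<Gamma> (Conj \<phi> \<psi>)"
| conj_elim1: "derivable \<Gamma> (Conj \<phi> \<psi>) \<Longrightarrow> derivable \<Gamma> \<phi>"
| conj_elim2: "derivable \<Gamma> (Conj \<phi> \<psi>) \<Longrightarrow> derivable \<Gamma> \<psi>"
| imp_intro: "derivable (\<Gamma> @ [\<phi>]) \<psi> \<Longrightarrow> derivable \<Gamma> (Imp \<phi> \<psi>)"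
| imp_elim: "derivable \<Gamma> (Imp \<phi> \<psi>) \<Longrightarrow> derivable (\<Gamma> @ [\<phi>]) \<psi>"
| excluded_middle: "derivable (\<Gamma> @ [\<phi>]) \<psi> \<Longrightarrow> derivable (\<Gamma> @ [Neg \<phi>]) \<psi> \<Longrightarrow> derivable \<Gamma> \<psi>"
| explosion: "derivable \<Gamma> (Neg \<phi>) \<Longrightarrow> derivable (\<Gamma> @ [\<phi>]) \<psi>"

end

theory Submission
  imports Defs
begin

theorem proposition3p1:
  fixes \<Gamma> \<Delta> :: "form list" and \<phi> :: form
  assumes "derivable \<Gamma> \<phi>"
  shows "derivable (\<Delta> @ \<Gamma>) \<phi>"
  using assms
  \<comment> \<open>Every rule only touches the right end of the antecedent, so each rule instance
    at \<open>\<Gamma>'\<close> is, up to associativity of \<open>@\<close>, also an instance at \<open>\<Delta> @ \<Gamma>'\<close>.\<close>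
  by (induction rule: derivable.induct)
    (auto intro: derivable.intros[where \<Gamma> = "\<Delta> @ \<Gamma>'" for \<Gamma>', simplified])

end
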